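(* Let $(X,\to,d_A)$ be a metric transition system over $A$, let $\mathcal G\subseteq[0,1]^X$ and $d_0=\alpha_S(\mathcal G)$, and assume that for every $\varepsilon>0$ and $x\in X$ there is $g\in\mathcal G$ with $g(x)=1$ and $g(x)\ominus g(x')\ge d_0(x,x')-\varepsilon$ for all $x'\in X$. Then \[\alpha_T\big(\mu(\mathit{lo}_T\cup\mathcal G)\big)=(d_{\mathrm{Tr}}\otimes d_0)_{\overrightarrow H}\circ(\hat\delta\times\hat\delta),\] i.e. for $X_1,X_2\subseteq X$ the left side at $(X_1,X_2)$ equals $\bigvee_{(\sigma_1,x_1')\in\hat\delta[X_1]}\bigwedge_{(\sigma_2,x_2')\in\hat\delta[X_2]}\max\{d_{\mathrm{Tr}}(\sigma_1,\sigma_2),d_0(x_1',x_2')\}$. Here $\mu(\mathit{lo}_T\cup\mathcal G)$ is the least fixpoint in $(\mathcal P([0,1]^X),\subseteq)$ of $\mathcal F\mapsto\mathit{lo}_T(\mathcal F)\cup\mathcal G$. The same holds if $\mathit{lo}_T$ is replaced by $\mathit{lo}'(\mathcal F)=\bigcup_{a\in A}\{\bigcirc_af\mid f\in\mathcal F\}\cup\{1\}$.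
   Context: A metric transition system over $A$ is $(X,\to,d_A)$ with $\to\subseteq X\times A\times X$ and a metric $d_A\colon A\times A\to[0,1]$. $r\oplus s=\min\{r+s,1\}$, $r\ominus s=\max\{0,r-s\}$; $\bigvee\emptyset=0$, $\bigwedge\emptyset=1$. $\alpha_S(\mathcal G)(x_1,x_2)=\bigvee_{f\in\mathcal G}(f(x_1)\ominus f(x_2))$. $\hat\delta[Y]=\{(\sigma,x')\mid\sigma\in A^*,\exists x\in Y\colon x\xrightarrow{\sigma}x'\}$ (paths, including the empty word). $d_{\mathrm{Tr}}(\sigma_1,\sigma_2)=1$ if $|\sigma_1|\neq|\sigma_2|$, $d_{\mathrm{Tr}}(\varepsilon,\varepsilon)=0$, $d_{\mathrm{Tr}}(a_1\sigma_1',a_2\sigma_2')=\max\{d_A(a_1,a_2),d_{\mathrm{Tr}}(\sigma_1',\sigma_2')\}$. $(d\otimes d')((u,v),(u',v'))=\max\{d(u,u'),d'(v,v')\}$, and $d_{\overrightarrow H}(U,V)=\bigvee_{u\in U}\bigwedge_{v\in V}d(u,v)$. $\bigcirc_af(x)=\bigvee\{(1-d_A(b,a))\land f(x')\mid x\xrightarrow{b}x'\}$. For $f\colon X\to[0,1]$, $\tilde f(Y)=\bigvee_{x\in Y}f(x)$; $\alpha_T(\mathcal F)(X_1,X_2)=\bigvee_{f\in\mathcal F}(\tilde f(X_1)\ominus\tilde f(X_2))$. $\mathit{lo}_T(\mathcal F)=\bigcup_{a\in A}\{\bigcirc_af\mid f\in\mathrm{cl}^{\mathrm{sh}}(\mathcal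 F)\}\cup\{1\}$ where $\mathrm{cl}^{\mathrm{sh}}$ closes under constant shifts $f\mapsto f\ominus c$, $f\mapsto f\oplus c$, $c\in[0,1]$, and $1$ is the constant-1 function. *)

theory Defs
  imports Main "HOL.Real"
begin

definition tplus :: "real \<Rightarrow> real \<Rightarrow> real" where
  "tplus r s = min (r + s) 1"
definition tminus :: "real \<Rightarrow> real \<Rightarrow> real" where
  "tminus r s = max 0 (r - s)"

definition sup01 :: "real set \<Rightarrow> real" where
  "sup01 S = (if S = {} then 0 else Sup S)"
definition inf01 :: "real set \<Rightarrow> real" where
  "inf01 S = (if S = {} then 1 else Inf S)"

definition is_metric01 :: "('a \<Rightarrow> 'a \<Rightarrow> real) \<Rightarrow> bool" where
  "is_metric01 d \<longleftrightarrow> (\<forall>a b. 0 \<le> d a b \<and> d a b \<le> 1) \<and>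
     (\<forall>a b. d a b = 0 \<longleftrightarrow> a = b) \<and> (\<forall>a b. d a b = d b a) \<and>
     (\<forall>a b c. d a c \<le> d a b + d b c)"

inductive path :: "('x \<times> 'a \<times> 'x) set \<Rightarrow> 'x \<Rightarrow> 'a list \<Rightarrow> 'x \<Rightarrow> bool"
  for T where
  path_nil: "path T x [] x"
| path_cons: "(x, a, y) \<in> T \<Longrightarrow> path T y \<sigma> z \<Longrightarrow> path T x (a # \<sigma>) z"

definition delta_hat :: "('x \<times> 'a \<times> 'x) set \<Rightarrow> 'x set \<Rightarrow> ('a list \<times> 'x) set" where
  "delta_hat T Y = {(\<sigma>, x'). \<exists>x\<in>Y. path T x \<sigma> x'}"

fun d_Tr :: "('a \<Rightarrow> 'a \<Rightarrow> real) \<Rightarrow> 'a list \<Rightarrow> 'a list \<Rightarrow> real" where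
  "d_Tr dA [] [] = 0"
| "d_Tr dA (a1 # s1) (a2 # s2) = max (dA a1 a2) (d_Tr dA s1 s2)"
| "d_Tr dA _ _ = 1"

definition circ :: "('x \<times> 'a \<times> 'x) set \<Rightarrow> ('a \<Rightarrow> 'a \<Rightarrow> real) \<Rightarrow> 'a \<Rightarrow> ('x \<Rightarrow> real) \<Rightarrow> 'x \<Rightarrow> real" where
  "circ T dA a f x = sup01 {min (1 - dA b a) (f x') | b x'. (x, b, x') \<in> T}"

inductive_set cl_sh :: "('x \<Rightarrow> real) set \<Rightarrow> ('x \<Rightarrow> real) set" for F where
  cl_base: "f \<in> F \<Longrightarrow> f \<in> cl_sh F"
| cl_minus: "f \<in> cl_sh F \<Longrightarrow> 0 \<le> c \<Longrightarrow> c \<le> 1 \<Longrightarrow> (\<lambda>x. tminus (f x) c) \<in> cl_sh F"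
| cl_plus: "f \<in> cl_sh F \<Longrightarrow> 0 \<le> c \<Longrightarrow> c \<le> 1 \<Longrightarrow> (\<lambda>x. tplus (f x) c) \<in> cl_sh F"

definition lo_T :: "('x \<times> 'a \<times> 'x) set \<Rightarrow> ('a \<Rightarrow> 'a \<Rightarrow> real) \<Rightarrow> ('x \<Rightarrow> real) set \<Rightarrow> ('x \<Rightarrow> real) set" where
  "lo_T T dA F = {circ T dA a f | a f. f \<in> cl_sh F} \<union> {\<lambda>_. 1}"

definition lo' :: "('x \<times> 'a \<times> 'x) set \<Rightarrow> ('a \<Rightarrow> 'a \<Rightarrow> real) \<Rightarrow> ('x \<Rightarrow> real) set \<Rightarrow> ('x \<Rightarrow> real) set" where
  "lo' T dA F = {circ T dA a f | a f. f \<in> F} \<union> {\<lambda>_. 1}"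

definition alpha_S :: "('x \<Rightarrow> real) set \<Rightarrow> 'x \<Rightarrow> 'x \<Rightarrow> real" where
  "alpha_S G x1 x2 = sup01 {tminus (g x1) (g x2) | g. g \<in> G}"

definition alpha_T :: "('x \<Rightarrow> real) set \<Rightarrow> 'x set \<Rightarrow> 'x set \<Rightarrow> real" where
  "alpha_T F X1 X2 = sup01 {tminus (sup01 (f ` X1)) (sup01 (f ` X2)) | f. f \<in> F}"

definition trace_hausdorff ::
  "('x \<times> 'a \<times> 'x) set \<Rightarrow> ('a \<Rightarrow> 'a \<Rightarrow> real) \<Rightarrow> ('x \<Rightarrow> 'x \<Rightarrow> real) \<Rightarrow> 'x set \<Rightarrow> 'x set \<Rightarrow> real" where
  "trace_hausdorff T dA d0 X1 X2 =
     sup01 {inf01 {max (d_Tr dA (fst u) (fst v)) (d0 (snd u) (snd v)) | v. v \<in> delta_hat T X2}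
           | u. u \<in> delta_hat T X1}"

end

theory Submission
  imports Defs
begin

text \<open>The two inequalities are proved separately, and the argument uses only three properties
  of the least fixpoint \<open>\<F>\<close>: it contains \<open>G\<close>, it is closed under every \<open>\<bigcirc>\<^sub>a\<close>, and it is
  contained in every set closed under \<open>lo\<^sub>T\<close> that contains \<open>G\<close>. Hence it holds for \<open>lo'\<close> as well.

  \<open>\<le>\<close>: call \<open>f\<close> trace-nonexpansive if \<open>f x \<le> \<Or>f[Y] + r\<close> whenever every path from \<open>x\<close> is
  matched, up to \<open>r\<close> both in trace distance and in \<open>d\<^sub>0\<close>, by a path from \<open>Y\<close>. The functions of \<open>G\<close>
  have this property because \<open>d\<^sub>0 = \<alpha>\<^sub>S(G)\<close>, and it is preserved by constant shifts and by
  \<open>\<bigcirc>\<^sub>a\<close>. So it holds on \<open>\<F>\<close>, and if the trace-Hausdorff distance from \<open>X\<^sub>1\<close> to \<open>X\<^sub>2\<close> is below \<open>r\<close>,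
  every \<open>x \<in> X\<^sub>1\<close> is matched within \<open>r\<close> by \<open>X\<^sub>2\<close>.

  \<open>\<ge>\<close>: for a path \<open>x\<^sub>0 \<midarrow>\<sigma>\<rightarrow> x\<close> with \<open>x\<^sub>0 \<in> X\<^sub>1\<close>, pick \<open>g \<in> G\<close> with \<open>g x = 1\<close> and
  \<open>1 - g \<ge> d\<^sub>0(x, \<cdot>) - \<epsilon>\<close>. Then \<open>\<bigcirc>\<^sub>\<sigma> g = \<bigcirc>\<^sub>\<sigma>\<^sub>1 \<dots> \<bigcirc>\<^sub>\<sigma>\<^sub>n g \<in> \<F>\<close> is \<open>1\<close> at \<open>x\<^sub>0\<close> and at most
  \<open>1 - D + \<epsilon>\<close> on \<open>X\<^sub>2\<close>, where \<open>D\<close> is the distance from \<open>(\<sigma>, x)\<close> to \<open>\<hat>\<delta>[X\<^sub>2]\<close>.\<close>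

abbreviation unit_valued :: "('x \<Rightarrow> real) \<Rightarrow> bool" where
  "unit_valued f \<equiv> \<forall>x. 0 \<le> f x \<and> f x \<le> 1"

lemma sup01_upper:
  assumes "s \<in> S" and "\<And>t. t \<in> S \<Longrightarrow> t \<le> B"
  shows "s \<le> sup01 S"
proof -
  have "bdd_above S" using assms(2) by (rule bdd_aboveI)
  with assms(1) show ?thesis unfolding sup01_def by (auto intro: cSup_upper)
qed

lemma sup01_least: "(\<And>s. s \<in> S \<Longrightarrow> s \<le> c) \<Longrightarrow> 0 \<le> c \<Longrightarrow> sup01 S \<le> c"
  unfolding sup01_def by (auto intro: cSup_least)

lemma sup01_bounds:
  assumes "\<And>s. s \<in> S \<Longrightarrow> 0 \<le> s \<and> s \<le> 1"
  shows "0 \<le> sup01 S \<and> sup01 S \<le> 1"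
proof (cases "S = {}")
  case False
  then obtain s where "s \<in> S" by blast
  with assms have "s \<le> sup01 S" by (intro sup01_upper[where B = 1]) auto
  with \<open>s \<in> S\<close> assms have "0 \<le> sup01 S" by force
  moreover have "sup01 S \<le> 1" using assms by (simp add: sup01_least)
  ultimately show ?thesis by blast
qed (simp add: sup01_def)

lemma sup01_image_nonneg: "unit_valued h \<Longrightarrow> 0 \<le> sup01 (h ` Y)"
  using sup01_bounds[of "h ` Y"] by auto

lemma sup01_image_le_one: "unit_valued h \<Longrightarrow> sup01 (h ` Y) \<le> 1"
  using sup01_bounds[of "h ` Y"] by auto

lemma sup01_image_upper: "unit_valued h \<Longrightarrow> y \<in> Y \<Longrightarrow> h y \<le> sup01 (h ` Y)"
  by (rule sup01_upper[where B = 1]) auto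

lemma tminus_nonneg [simp]: "0 \<le> tminus s t"
  by (simp add: tminus_def)

lemma tminus_le_one: "s \<le> 1 \<Longrightarrow> 0 \<le> t \<Longrightarrow> tminus s t \<le> 1"
  by (simp add: tminus_def)

lemma le_sup01_image_add_iff:
  assumes "unit_valued h" and "Y \<noteq> {}"
  shows "a \<le> sup01 (h ` Y) + r \<longleftrightarrow> (\<forall>e>0. \<exists>y\<in>Y. a \<le> h y + r + e)"
proof
  assume a: "a \<le> sup01 (h ` Y) + r"
  show "\<forall>e>0. \<exists>y\<in>Y. a \<le> h y + r + e"
  proof (intro allI impI)
    fix e :: real assume "0 < e"
    with a assms(2) have "a - r - e < Sup (h ` Y)" by (simp add: sup01_def)
    then obtain y where "y \<in> Y" "a - r - e < h y" using less_cSupD[of "h ` Y"] assms(2) by auto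
    then show "\<exists>y\<in>Y. a \<le> h y + r + e" by (auto intro!: bexI[of _ y])
  qed
next
  assume approx: "\<forall>e>0. \<exists>y\<in>Y. a \<le> h y + r + e"
  show "a \<le> sup01 (h ` Y) + r"
  proof (rule field_le_epsilon)
    fix e :: real assume "0 < e"
    then obtain y where "y \<in> Y" "a \<le> h y + r + e" using approx by blast
    moreover have "h y \<le> sup01 (h ` Y)" using assms(1) \<open>y \<in> Y\<close> by (rule sup01_image_upper)
    ultimately show "a \<le> sup01 (h ` Y) + r + e" by linarith
  qed
qed

lemma inf01_lower:
  assumes "s \<in> S" and "\<And>t. t \<in> S \<Longrightarrow> B \<le> t"
  shows "inf01 S \<le> s"
proof -
  have "bdd_below S" using assms(2) by (rule bdd_belowI)
  with assms(1) show ?thesis unfolding inf01_def by (auto intro: cInf_lower)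
qed

lemma inf01_bounds:
  assumes "\<And>s. s \<in> S \<Longrightarrow> 0 \<le> s \<and> s \<le> 1"
  shows "0 \<le> inf01 S \<and> inf01 S \<le> 1"
proof (cases "S = {}")
  case False
  then obtain s where "s \<in> S" by blast
  then have "inf01 S \<le> 1" using assms by (meson inf01_lower order_trans)
  moreover have "0 \<le> Inf S" using False assms by (meson cInf_greatest)
  ultimately show ?thesis using False by (simp add: inf01_def)
qed (simp add: inf01_def)

lemma inf01_lessD: "inf01 S < r \<Longrightarrow> r \<le> 1 \<Longrightarrow> \<exists>s\<in>S. s < r"
  unfolding inf01_def by (auto split: if_splits intro: cInf_lessD)

lemma is_metric01D:
  assumes "is_metric01 dA"
  shows "0 \<le> dA a b" "dA a b \<le> 1" "dA a a = 0" "dA a b = dA b a" "dA a c \<le> dA a b + dA b c"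
  using assms unfolding is_metric01_def by blast+

lemma d_Tr_bounds:
  assumes "is_metric01 dA"
  shows "0 \<le> d_Tr dA \<sigma> \<tau> \<and> d_Tr dA \<sigma> \<tau> \<le> 1"
proof (induction \<sigma> arbitrary: \<tau>)
  case Nil then show ?case by (cases \<tau>) auto
next
  case (Cons a \<sigma>) then show ?case
    using is_metric01D(1,2)[OF assms] by (cases \<tau>) (auto simp: max_def)
qed

lemma d_Tr_commute:
  assumes "is_metric01 dA"
  shows "d_Tr dA \<sigma> \<tau> = d_Tr dA \<tau> \<sigma>"
proof (induction \<sigma> arbitrary: \<tau>)
  case Nil then show ?case by (cases \<tau>) auto
next
  case (Cons a \<sigma>) then show ?case
    using is_metric01D(4)[OF assms] by (cases \<tau>) auto
qed

inductive_simps path_Nil_iff: "path T x [] y"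
inductive_simps path_Cons_iff: "path T x (a # \<sigma>) y"

text \<open>\<open>matched_within T dA d0 r x Y\<close> says that \<open>(d_Tr dA \<otimes> d0)\<^sub>H(\<hat>\<delta>[{x}], \<hat>\<delta>[Y]) \<le> r\<close>
  with every infimum attained.\<close>
definition matched_within ::
  "('x \<times> 'a \<times> 'x) set \<Rightarrow> ('a \<Rightarrow> 'a \<Rightarrow> real) \<Rightarrow> ('x \<Rightarrow> 'x \<Rightarrow> real) \<Rightarrow> real \<Rightarrow> 'x \<Rightarrow> 'x set \<Rightarrow> bool"
  where "matched_within T dA d0 r x Y \<longleftrightarrow>
    (\<forall>\<sigma> x'. path T x \<sigma> x' \<longrightarrow> (\<exists>y\<in>Y. \<exists>\<tau> y'. path T y \<tau> y' \<and> d_Tr dA \<sigma> \<tau> \<le> r \<and> d0 x' y' \<le> r))"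

lemma matched_within_start:
  assumes "matched_within T dA d0 r x Y" and "r < 1"
  shows "\<exists>y\<in>Y. d0 x y \<le> r"
proof -
  obtain y \<tau> y' where y: "y \<in> Y" "path T y \<tau> y'" "d_Tr dA [] \<tau> \<le> r" "d0 x y' \<le> r"
    using assms(1) path_nil[of T x] unfolding matched_within_def by blast
  then have "\<tau> = []" using assms(2) by (cases \<tau>) auto
  with y(2) have "y' = y" by (simp add: path_Nil_iff)
  with y show ?thesis by blast
qed

lemma matched_within_step:
  assumes "matched_within T dA d0 r x Y" and "r < 1" and "(x, b, x') \<in> T"
  shows "matched_within T dA d0 r x' {z. \<exists>y\<in>Y. \<exists>b'. (y, b', z) \<in> T \<and> dA b b' \<le> r}"
  unfolding matched_within_def
proof (intro allI impI)
  fix \<sigma> x'' assume "path T x' \<sigma> x''"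
  with assms(3) have "path T x (b # \<sigma>) x''" by (rule path_cons)
  then obtain y \<tau> y' where y: "y \<in> Y" "path T y \<tau> y'" "d_Tr dA (b # \<sigma>) \<tau> \<le> r" "d0 x'' y' \<le> r"
    using assms(1) unfolding matched_within_def by blast
  then obtain b' \<tau>' where "\<tau> = b' # \<tau>'" using assms(2) by (cases \<tau>) auto
  with y obtain z where "(y, b', z) \<in> T" "path T z \<tau>' y'" "dA b b' \<le> r" "d_Tr dA \<sigma> \<tau>' \<le> r"
    by (auto simp: path_Cons_iff)
  with y show "\<exists>z\<in>{z. \<exists>y\<in>Y. \<exists>b'. (y, b', z) \<in> T \<and> dA b b' \<le> r}.
      \<exists>\<tau> y'. path T z \<tau> y' \<and> d_Tr dA \<sigma> \<tau> \<le> r \<and> d0 x'' y' \<le> r"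
    by blast
qed

definition trace_dist_to ::
  "('x \<times> 'a \<times> 'x) set \<Rightarrow> ('a \<Rightarrow> 'a \<Rightarrow> real) \<Rightarrow> ('x \<Rightarrow> 'x \<Rightarrow> real) \<Rightarrow> 'a list \<Rightarrow> 'x \<Rightarrow> 'x set \<Rightarrow> real"
  where "trace_dist_to T dA d0 \<sigma> x Y =
    inf01 {max (d_Tr dA \<sigma> \<tau>) (d0 x y) | \<tau> y. (\<tau>, y) \<in> delta_hat T Y}"

lemma trace_hausdorff_eq:
  "trace_hausdorff T dA d0 X1 X2 = sup01 {trace_dist_to T dA d0 \<sigma> x X2 | \<sigma> x. (\<sigma>, x) \<in> delta_hat T X1}"
  unfolding trace_hausdorff_def trace_dist_to_def by (rule arg_cong[where f = sup01]) force

lemma trace_dist_to_bounds: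
  assumes "is_metric01 dA" and "\<forall>x y. 0 \<le> d0 x y \<and> d0 x y \<le> 1"
  shows "0 \<le> trace_dist_to T dA d0 \<sigma> x Y \<and> trace_dist_to T dA d0 \<sigma> x Y \<le> 1"
  unfolding trace_dist_to_def using d_Tr_bounds[OF assms(1)] assms(2)
  by (intro inf01_bounds) (fastforce simp: max_def)

lemma trace_dist_to_le_trace_hausdorff:
  assumes "is_metric01 dA" and "\<forall>x y. 0 \<le> d0 x y \<and> d0 x y \<le> 1" and "(\<sigma>, x) \<in> delta_hat T X1"
  shows "trace_dist_to T dA d0 \<sigma> x X2 \<le> trace_hausdorff T dA d0 X1 X2"
  unfolding trace_hausdorff_eq using assms(3) trace_dist_to_bounds[OF assms(1,2)]
  by (intro sup01_upper[where B = 1]) blast+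

lemma trace_hausdorff_bounds:
  assumes "is_metric01 dA" and "\<forall>x y. 0 \<le> d0 x y \<and> d0 x y \<le> 1"
  shows "0 \<le> trace_hausdorff T dA d0 X1 X2 \<and> trace_hausdorff T dA d0 X1 X2 \<le> 1"
  unfolding trace_hausdorff_eq using trace_dist_to_bounds[OF assms] by (intro sup01_bounds) blast

lemma matched_within_of_trace_hausdorff_less:
  assumes "is_metric01 dA" and "\<forall>x y. 0 \<le> d0 x y \<and> d0 x y \<le> 1"
    and "trace_hausdorff T dA d0 X1 X2 < r" and "r \<le> 1" and "x \<in> X1"
  shows "matched_within T dA d0 r x X2"
  unfolding matched_within_def
proof (intro allI impI)
  fix \<sigma> x' assume "path T x \<sigma> x'"
  then have "(\<sigma>, x') \<in> delta_hat T X1" using assms(5) unfolding delta_hat_def by blast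
  then have "trace_dist_to T dA d0 \<sigma> x' X2 < r"
    using trace_dist_to_le_trace_hausdorff[OF assms(1,2)] assms(3) by (meson le_less_trans)
  then obtain \<tau> y' where "(\<tau>, y') \<in> delta_hat T X2" "max (d_Tr dA \<sigma> \<tau>) (d0 x' y') < r"
    unfolding trace_dist_to_def using assms(4) by (auto dest: inf01_lessD)
  then show "\<exists>y\<in>X2. \<exists>\<tau> y'. path T y \<tau> y' \<and> d_Tr dA \<sigma> \<tau> \<le> r \<and> d0 x' y' \<le> r"
    unfolding delta_hat_def by force
qed

lemma circ_bounds:
  assumes "is_metric01 dA" and "unit_valued f"
  shows "unit_valued (circ T dA a f)"
  unfolding circ_def using is_metric01D(1,2)[OF assms(1)] assms(2)
  by (intro allI sup01_bounds) (auto simp: min_def)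

lemma circ_ge:
  assumes "unit_valued f" and "(x, b, x') \<in> T"
  shows "min (1 - dA b a) (f x') \<le> circ T dA a f x"
  unfolding circ_def using assms by (intro sup01_upper[where B = 1]) (auto simp: min_le_iff_disj)

lemma circ_le:
  assumes "\<And>b x'. (x, b, x') \<in> T \<Longrightarrow> min (1 - dA b a) (f x') \<le> c" and "0 \<le> c"
  shows "circ T dA a f x \<le> c"
  unfolding circ_def using assms by (intro sup01_least) auto

definition trace_nonexpansive ::
  "('x \<times> 'a \<times> 'x) set \<Rightarrow> ('a \<Rightarrow> 'a \<Rightarrow> real) \<Rightarrow> ('x \<Rightarrow> 'x \<Rightarrow> real) \<Rightarrow> ('x \<Rightarrow> real) \<Rightarrow> bool"
  where "trace_nonexpansive T dA d0 f \<longleftrightarrow> unit_valued f \<and>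
    (\<forall>r x Y. 0 \<le> r \<longrightarrow> r < 1 \<longrightarrow> matched_within T dA d0 r x Y \<longrightarrow>
      (\<forall>e>0. \<exists>y\<in>Y. f x \<le> f y + r + e))"

lemma trace_nonexpansiveD:
  assumes "trace_nonexpansive T dA d0 f"
  shows "unit_valued f"
    and "0 \<le> r \<Longrightarrow> r < 1 \<Longrightarrow> matched_within T dA d0 r x Y \<Longrightarrow> 0 < e \<Longrightarrow> \<exists>y\<in>Y. f x \<le> f y + r + e"
  using assms unfolding trace_nonexpansive_def by blast+

lemma trace_nonexpansiveI:
  assumes "unit_valued f"
    and "\<And>r x Y. 0 \<le> r \<Longrightarrow> r < 1 \<Longrightarrow> matched_within T dA d0 r x Y \<Longrightarrow> f x \<le> sup01 (f ` Y) + r"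
  shows "trace_nonexpansive T dA d0 f"
  unfolding trace_nonexpansive_def
proof (intro conjI allI impI)
  fix x show "0 \<le> f x" "f x \<le> 1" using assms(1) by simp_all
next
  fix r x Y and e :: real
  assume r: "0 \<le> r" "r < 1" and xY: "matched_within T dA d0 r x Y" and "0 < e"
  have "Y \<noteq> {}" using matched_within_start[OF xY r(2)] by blast
  with assms(2)[OF r xY] have "\<forall>e>0. \<exists>y\<in>Y. f x \<le> f y + r + e"
    by (simp add: le_sup01_image_add_iff[OF assms(1)])
  with \<open>0 < e\<close> show "\<exists>y\<in>Y. f x \<le> f y + r + e" by blast
qed

lemma trace_nonexpansive_sup01_image_le:
  assumes f: "trace_nonexpansive T dA d0 f" and r: "0 \<le> r" "r < 1"
    and matched: "\<And>x. x \<in> X1 \<Longrightarrow> matched_within T dA d0 r x X2"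
  shows "sup01 (f ` X1) \<le> sup01 (f ` X2) + r"
proof (rule sup01_least)
  have f01: "unit_valued f" using f by (rule trace_nonexpansiveD)
  fix s assume "s \<in> f ` X1"
  then obtain x where "x \<in> X1" "s = f x" by blast
  note xX2 = matched[OF \<open>x \<in> X1\<close>]
  have "X2 \<noteq> {}" using matched_within_start[OF xX2 r(2)] by blast
  with trace_nonexpansiveD(2)[OF f r xX2] show "s \<le> sup01 (f ` X2) + r"
    unfolding \<open>s = f x\<close> by (simp add: le_sup01_image_add_iff[OF f01])
next
  show "0 \<le> sup01 (f ` X2) + r" using sup01_image_nonneg[OF trace_nonexpansiveD(1)[OF f]] r(1) by simp
qed

lemma trace_nonexpansive_comp:
  assumes "trace_nonexpansive T dA d0 f"
    and "\<And>s t d. s \<le> t + d \<Longrightarrow> 0 \<le> d \<Longrightarrow> \<phi> s \<le> \<phi> t + d"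
    and "\<And>s. 0 \<le> s \<Longrightarrow> s \<le> 1 \<Longrightarrow> 0 \<le> \<phi> s \<and> \<phi> s \<le> 1"
  shows "trace_nonexpansive T dA d0 (\<lambda>x. \<phi> (f x))"
  unfolding trace_nonexpansive_def
proof (intro conjI allI impI)
  fix x show "0 \<le> \<phi> (f x)" "\<phi> (f x) \<le> 1"
    using trace_nonexpansiveD(1)[OF assms(1)] assms(3) by blast+
next
  fix r x Y and e :: real
  assume r: "0 \<le> r" "r < 1" "matched_within T dA d0 r x Y" and "0 < e"
  then obtain y where "y \<in> Y" "f x \<le> f y + (r + e)"
    using trace_nonexpansiveD(2)[OF assms(1)] by (metis add.assoc)
  with r(1) \<open>0 < e\<close> have "\<phi> (f x) \<le> \<phi> (f y) + (r + e)" by (intro assms(2)) auto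
  with \<open>y \<in> Y\<close> show "\<exists>y\<in>Y. \<phi> (f x) \<le> \<phi> (f y) + r + e" by (metis add.assoc)
qed

lemma trace_nonexpansive_tminus:
  "trace_nonexpansive T dA d0 f \<Longrightarrow> 0 \<le> c \<Longrightarrow> trace_nonexpansive T dA d0 (\<lambda>x. tminus (f x) c)"
  by (rule trace_nonexpansive_comp) (auto simp: tminus_def)

lemma trace_nonexpansive_tplus:
  "trace_nonexpansive T dA d0 f \<Longrightarrow> 0 \<le> c \<Longrightarrow> trace_nonexpansive T dA d0 (\<lambda>x. tplus (f x) c)"
  by (rule trace_nonexpansive_comp) (auto simp: tplus_def)

lemma trace_nonexpansive_cl_sh:
  "f \<in> cl_sh F \<Longrightarrow> \<forall>g\<in>F. trace_nonexpansive T dA d0 g \<Longrightarrow> trace_nonexpansive T dA d0 f"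
  by (induction rule: cl_sh.induct) (auto intro: trace_nonexpansive_tminus trace_nonexpansive_tplus)

lemma trace_nonexpansive_one: "trace_nonexpansive T dA d0 (\<lambda>_. 1)"
  unfolding trace_nonexpansive_def by (auto dest!: matched_within_start)

lemma alpha_S_bounds:
  assumes "\<forall>g\<in>G. unit_valued g"
  shows "0 \<le> alpha_S G x y \<and> alpha_S G x y \<le> 1"
  unfolding alpha_S_def using assms by (intro sup01_bounds) (auto intro!: tminus_le_one)

lemma alpha_S_ge:
  assumes "\<forall>g\<in>G. unit_valued g" and "g \<in> G"
  shows "g x - g y \<le> alpha_S G x y"
proof -
  have "tminus (g x) (g y) \<le> alpha_S G x y"
    unfolding alpha_S_def using assms by (intro sup01_upper[where B = 1]) (auto intro!: tminus_le_one)
  then show ?thesis by (simp add: tminus_def)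
qed

lemma trace_nonexpansive_alpha_S:
  assumes "\<forall>g\<in>G. unit_valued g" and "g \<in> G"
  shows "trace_nonexpansive T dA (alpha_S G) g"
  unfolding trace_nonexpansive_def
proof (intro conjI allI impI)
  fix x show "0 \<le> g x" "g x \<le> 1" using assms by simp_all
next
  fix r x Y and e :: real
  assume "0 \<le> r" "r < 1" "matched_within T dA (alpha_S G) r x Y" "0 < e"
  then obtain y where "y \<in> Y" "alpha_S G x y \<le> r" using matched_within_start by metis
  moreover have "g x - g y \<le> alpha_S G x y" using assms by (rule alpha_S_ge)
  ultimately have "g x \<le> g y + r + e" using \<open>0 < e\<close> by linarith
  with \<open>y \<in> Y\<close> show "\<exists>y\<in>Y. g x \<le> g y + r + e" by blast
qed

text \<open>A transition \<open>x \<midarrow>b\<rightarrow> x'\<close> is answered by a transition \<open>y \<midarrow>b'\<rightarrow> z\<close> from \<open>Y\<close> with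
  \<open>d\<^sub>A(b, b') \<le> r\<close>; the triangle inequality for \<open>d\<^sub>A\<close> then bounds the loss in the first argument
  of the minimum in \<open>\<bigcirc>\<^sub>a\<close>, and the invariant for \<open>f\<close> at \<open>x'\<close> bounds the loss in the second.\<close>
lemma circ_le_sup01_image_add:
  assumes metric: "is_metric01 dA" and f: "trace_nonexpansive T dA d0 f"
    and r: "0 \<le> r" "r < 1" and xY: "matched_within T dA d0 r x Y"
  shows "circ T dA a f x \<le> sup01 (circ T dA a f ` Y) + r"
proof (rule circ_le)
  have f01: "unit_valued f" using f by (rule trace_nonexpansiveD)
  have h01: "unit_valued (circ T dA a f)" using metric f01 by (rule circ_bounds)
  show "0 \<le> sup01 (circ T dA a f ` Y) + r" using r(1) sup01_image_nonneg[OF h01] by simp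
  fix b x' assume "(x, b, x') \<in> T"
  define Z where "Z = {z. \<exists>y\<in>Y. \<exists>b'. (y, b', z) \<in> T \<and> dA b b' \<le> r}"
  have x'Z: "matched_within T dA d0 r x' Z"
    unfolding Z_def using xY r(2) \<open>(x, b, x') \<in> T\<close> by (rule matched_within_step)
  show "min (1 - dA b a) (f x') \<le> sup01 (circ T dA a f ` Y) + r"
  proof (rule field_le_epsilon)
    fix e :: real assume "0 < e"
    then obtain z where "z \<in> Z" and fz: "f x' \<le> f z + r + e"
      using trace_nonexpansiveD(2)[OF f r x'Z \<open>0 < e\<close>] by blast
    then obtain y b' where "y \<in> Y" "(y, b', z) \<in> T" "dA b b' \<le> r" unfolding Z_def by blast
    have "dA b' a \<le> dA b a + r"
      using is_metric01D(5)[OF metric, of b' a b] is_metric01D(4)[OF metric, of b' b] \<open>dA b b' \<le> r\<close>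
      by linarith
    with fz \<open>0 < e\<close> have "min (1 - dA b a) (f x') \<le> min (1 - dA b' a) (f z) + r + e"
      by (simp add: min_def)
    also have "\<dots> \<le> circ T dA a f y + r + e"
      using circ_ge[OF f01 \<open>(y, b', z) \<in> T\<close>] by simp
    also have "\<dots> \<le> sup01 (circ T dA a f ` Y) + r + e"
      using sup01_image_upper[OF h01 \<open>y \<in> Y\<close>] by simp
    finally show "min (1 - dA b a) (f x') \<le> sup01 (circ T dA a f ` Y) + r + e" .
  qed
qed

lemma trace_nonexpansive_circ:
  assumes "is_metric01 dA" and "trace_nonexpansive T dA d0 f"
  shows "trace_nonexpansive T dA d0 (circ T dA a f)"
proof (rule trace_nonexpansiveI)
  show "unit_valued (circ T dA a f)" using assms(1) trace_nonexpansiveD(1)[OF assms(2)] by (rule circ_bounds)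
qed (rule circ_le_sup01_image_add[OF assms])

definition circ_word :: "('x \<times> 'a \<times> 'x) set \<Rightarrow> ('a \<Rightarrow> 'a \<Rightarrow> real) \<Rightarrow> 'a list \<Rightarrow> ('x \<Rightarrow> real) \<Rightarrow> 'x \<Rightarrow> real"
  where "circ_word T dA \<sigma> g = foldr (circ T dA) \<sigma> g"

lemma circ_word_simps [simp]:
  "circ_word T dA [] g = g"
  "circ_word T dA (a # \<sigma>) g = circ T dA a (circ_word T dA \<sigma> g)"
  unfolding circ_word_def by simp_all

lemma circ_word_bounds:
  assumes "is_metric01 dA" and "unit_valued g"
  shows "unit_valued (circ_word T dA \<sigma> g)"
  using assms by (induction \<sigma>) (simp_all add: circ_bounds)

lemma circ_word_mem:
  assumes "g \<in> F" and "\<And>a f. f \<in> F \<Longrightarrow> circ T dA a f \<in> F"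
  shows "circ_word T dA \<sigma> g \<in> F"
  using assms by (induction \<sigma>) simp_all

lemma circ_word_ge:
  assumes "is_metric01 dA" and "unit_valued g" and "path T x \<sigma> x'"
  shows "g x' \<le> circ_word T dA \<sigma> g x"
  using assms(3)
proof (induction rule: path.induct)
  case (path_cons x a y \<sigma> z)
  have "unit_valued (circ_word T dA \<sigma> g)" using assms(1,2) by (rule circ_word_bounds)
  then have "min (1 - dA a a) (circ_word T dA \<sigma> g y) \<le> circ_word T dA (a # \<sigma>) g x"
    using circ_ge path_cons(1) by simp
  with path_cons(3) \<open>unit_valued (circ_word T dA \<sigma> g)\<close> show ?case
    using is_metric01D(3)[OF assms(1)] by (simp add: min_absorb2)
qed simp

lemma circ_word_le:
  assumes "is_metric01 dA" and "unit_valued g" and "c \<le> 1"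
    and "\<And>\<tau> x'. path T x \<tau> x' \<Longrightarrow> c \<le> max (d_Tr dA \<tau> \<sigma>) (1 - g x')"
  shows "circ_word T dA \<sigma> g x \<le> 1 - c"
  using assms(4)
proof (induction \<sigma> arbitrary: x)
  case Nil
  then have "c \<le> max 0 (1 - g x)" using path_nil[of T x] by fastforce
  then show ?case using assms(2) by (simp add: max_def split: if_splits)
next
  case (Cons a \<sigma>)
  show ?case unfolding circ_word_simps
  proof (rule circ_le)
    fix b x' assume "(x, b, x') \<in> T"
    show "min (1 - dA b a) (circ_word T dA \<sigma> g x') \<le> 1 - c"
    proof (cases "c \<le> dA b a")
      case False
      have "c \<le> max (d_Tr dA \<tau> \<sigma>) (1 - g x'')" if "path T x' \<tau> x''" for \<tau> x''
        using Cons.prems[OF path_cons[OF \<open>(x, b, x') \<in> T\<close> that]] False by auto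
      then show ?thesis using Cons.IH by fastforce
    qed simp
  qed (use assms(3) in simp)
qed

lemma alpha_T_ge:
  assumes "\<forall>f\<in>F. unit_valued f" and "f \<in> F"
  shows "tminus (sup01 (f ` X1)) (sup01 (f ` X2)) \<le> alpha_T F X1 X2"
  unfolding alpha_T_def using assms
  by (intro sup01_upper[where B = 1]) (auto intro!: tminus_le_one sup01_image_le_one sup01_image_nonneg)

lemma alpha_T_bounds:
  assumes "\<forall>f\<in>F. unit_valued f"
  shows "0 \<le> alpha_T F X1 X2 \<and> alpha_T F X1 X2 \<le> 1"
  unfolding alpha_T_def using assms
  by (intro sup01_bounds) (auto intro!: tminus_le_one sup01_image_le_one sup01_image_nonneg)

lemma alpha_T_le_trace_hausdorff:
  assumes metric: "is_metric01 dA" and d0: "\<forall>x y. 0 \<le> d0 x y \<and> d0 x y \<le> 1"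
    and F: "\<forall>f\<in>F. trace_nonexpansive T dA d0 f"
  shows "alpha_T F X1 X2 \<le> trace_hausdorff T dA d0 X1 X2"
proof -
  define H where "H = trace_hausdorff T dA d0 X1 X2"
  have H: "0 \<le> H" "H \<le> 1" unfolding H_def using trace_hausdorff_bounds[OF metric d0] by simp_all
  have sup_le: "sup01 (f ` X1) \<le> sup01 (f ` X2) + H" if "f \<in> F" for f
  proof (rule field_le_epsilon)
    fix e :: real assume "0 < e"
    have f: "trace_nonexpansive T dA d0 f" using F that by simp
    show "sup01 (f ` X1) \<le> sup01 (f ` X2) + H + e"
    proof (cases "H + e < 1")
      case True
      have "matched_within T dA d0 (H + e) x X2" if "x \<in> X1" for x
        using H_def \<open>0 < e\<close> True that by (intro matched_within_of_trace_hausdorff_less[OF metric d0]) simp_all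
      with trace_nonexpansive_sup01_image_le[OF f _ True] H(1) \<open>0 < e\<close> show ?thesis
        by (simp add: add.assoc)
    next
      case False
      then show ?thesis
        using sup01_image_le_one[OF trace_nonexpansiveD(1)[OF f], of X1]
          sup01_image_nonneg[OF trace_nonexpansiveD(1)[OF f], of X2] by linarith
    qed
  qed
  show ?thesis
    unfolding alpha_T_def H_def[symmetric]
  proof (rule sup01_least)
    fix s assume "s \<in> {tminus (sup01 (f ` X1)) (sup01 (f ` X2)) |f. f \<in> F}"
    then obtain f where "f \<in> F" "s = tminus (sup01 (f ` X1)) (sup01 (f ` X2))" by blast
    with sup_le[OF \<open>f \<in> F\<close>] H(1) show "s \<le> H" by (simp add: tminus_def)
  qed (rule H(1))
qed

lemma circ_word_le_trace_dist_to:
  assumes metric: "is_metric01 dA" and d0: "\<forall>x y. 0 \<le> d0 x y \<and> d0 x y \<le> 1"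
    and g01: "unit_valued g" and g_peak: "\<And>x'. d0 x x' - e \<le> 1 - g x'" and "0 < e" and "y \<in> Y"
  shows "circ_word T dA \<sigma> g y \<le> 1 - (trace_dist_to T dA d0 \<sigma> x Y - e)"
proof (rule circ_word_le[OF metric g01])
  show "trace_dist_to T dA d0 \<sigma> x Y - e \<le> 1"
    using trace_dist_to_bounds[OF metric d0, of T \<sigma> x Y] \<open>0 < e\<close> by simp
  fix \<tau> y' assume "path T y \<tau> y'"
  then have "(\<tau>, y') \<in> delta_hat T Y" using \<open>y \<in> Y\<close> unfolding delta_hat_def by blast
  then have "trace_dist_to T dA d0 \<sigma> x Y \<le> max (d_Tr dA \<sigma> \<tau>) (d0 x y')"
    unfolding trace_dist_to_def using d_Tr_bounds[OF metric] d0
    by (intro inf01_lower[where B = 0]) (auto simp: le_max_iff_disj)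
  with g_peak[of y'] \<open>0 < e\<close> show "trace_dist_to T dA d0 \<sigma> x Y - e \<le> max (d_Tr dA \<tau> \<sigma>) (1 - g y')"
    unfolding d_Tr_commute[OF metric, of \<sigma> \<tau>] max_def by (auto split: if_splits)
qed

lemma trace_dist_to_le_alpha_T:
  assumes metric: "is_metric01 dA" and d0: "\<forall>x y. 0 \<le> d0 x y \<and> d0 x y \<le> 1"
    and G: "\<forall>g\<in>G. unit_valued g"
    and peak: "\<forall>\<epsilon>>0. \<forall>x. \<exists>g\<in>G. g x = 1 \<and> (\<forall>x'. tminus (g x) (g x') \<ge> d0 x x' - \<epsilon>)"
    and "G \<subseteq> F" and F_circ: "\<And>a f. f \<in> F \<Longrightarrow> circ T dA a f \<in> F" and F: "\<forall>f\<in>F. unit_valued f"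
    and path: "(\<sigma>, x) \<in> delta_hat T X1"
  shows "trace_dist_to T dA d0 \<sigma> x X2 \<le> alpha_T F X1 X2"
proof (rule field_le_epsilon)
  fix e :: real assume "0 < e"
  define D where "D = trace_dist_to T dA d0 \<sigma> x X2"
  obtain x0 where "x0 \<in> X1" "path T x0 \<sigma> x" using path unfolding delta_hat_def by blast
  obtain g where "g \<in> G" "g x = 1" and g_peak: "\<And>x'. d0 x x' - e \<le> 1 - g x'"
    using peak \<open>0 < e\<close> G by (fastforce simp: tminus_def)
  have g01: "unit_valued g" using G \<open>g \<in> G\<close> by blast
  define f where "f = circ_word T dA \<sigma> g"
  have "f \<in> F" unfolding f_def using \<open>g \<in> G\<close> \<open>G \<subseteq> F\<close> F_circ by (blast intro: circ_word_mem)
  have "1 \<le> f x0" unfolding f_def using circ_word_ge[OF metric g01 \<open>path T x0 \<sigma> x\<close>] \<open>g x = 1\<close> by simp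
  then have "1 \<le> sup01 (f ` X1)"
    using sup01_image_upper[of f x0 X1] \<open>x0 \<in> X1\<close> F \<open>f \<in> F\<close> by auto
  moreover have "sup01 (f ` X2) \<le> 1 - (D - e)"
    unfolding f_def D_def using circ_word_le_trace_dist_to[OF metric d0 g01 g_peak \<open>0 < e\<close>]
      trace_dist_to_bounds[OF metric d0, of T \<sigma> x X2] \<open>0 < e\<close>
    by (intro sup01_least) auto
  ultimately have "D - e \<le> tminus (sup01 (f ` X1)) (sup01 (f ` X2))" by (simp add: tminus_def)
  also have "\<dots> \<le> alpha_T F X1 X2" using F \<open>f \<in> F\<close> by (rule alpha_T_ge)
  finally show "D \<le> alpha_T F X1 X2 + e" by simp
qed

lemma trace_hausdorff_le_alpha_T:
  assumes metric: "is_metric01 dA" and d0: "\<forall>x y. 0 \<le> d0 x y \<and> d0 x y \<le> 1"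
    and G: "\<forall>g\<in>G. unit_valued g"
    and peak: "\<forall>\<epsilon>>0. \<forall>x. \<exists>g\<in>G. g x = 1 \<and> (\<forall>x'. tminus (g x) (g x') \<ge> d0 x x' - \<epsilon>)"
    and "G \<subseteq> F" and "\<And>a f. f \<in> F \<Longrightarrow> circ T dA a f \<in> F" and F: "\<forall>f\<in>F. unit_valued f"
  shows "trace_hausdorff T dA d0 X1 X2 \<le> alpha_T F X1 X2"
  unfolding trace_hausdorff_eq using trace_dist_to_le_alpha_T[OF assms] alpha_T_bounds[OF F]
  by (intro sup01_least) auto

lemma alpha_T_eq_trace_hausdorff:
  assumes metric: "is_metric01 dA" and G: "\<forall>g\<in>G. unit_valued g"
    and peak: "\<forall>\<epsilon>>0. \<forall>x. \<exists>g\<in>G. g x = 1 \<and> (\<forall>x'. tminus (g x) (g x') \<ge> alpha_S G x x' - \<epsilon>)"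
    and "G \<subseteq> F" and "\<And>a f. f \<in> F \<Longrightarrow> circ T dA a f \<in> F"
    and F: "\<forall>f\<in>F. trace_nonexpansive T dA (alpha_S G) f"
  shows "alpha_T F X1 X2 = trace_hausdorff T dA (alpha_S G) X1 X2"
proof (rule antisym)
  have d0: "\<forall>x y. 0 \<le> alpha_S G x y \<and> alpha_S G x y \<le> 1" using alpha_S_bounds[OF G] by blast
  show "alpha_T F X1 X2 \<le> trace_hausdorff T dA (alpha_S G) X1 X2"
    using metric d0 F by (rule alpha_T_le_trace_hausdorff)
  show "trace_hausdorff T dA (alpha_S G) X1 X2 \<le> alpha_T F X1 X2"
    using trace_hausdorff_le_alpha_T[OF metric d0 G peak assms(4,5)] F trace_nonexpansiveD(1) by blast
qed

lemma lo'_subset_lo_T: "lo' T dA F \<subseteq> lo_T T dA F"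
  unfolding lo'_def lo_T_def by (blast intro: cl_base)

lemma cl_sh_mono: "F \<subseteq> F' \<Longrightarrow> cl_sh F \<subseteq> cl_sh F'"
proof
  fix f assume "F \<subseteq> F'" and "f \<in> cl_sh F"
  then show "f \<in> cl_sh F'" by (induction rule: cl_sh.induct[OF \<open>f \<in> cl_sh F\<close>]) (auto intro: cl_sh.intros)
qed

lemma mono_lo_T: "mono (\<lambda>F. lo_T T dA F \<union> G)"
  unfolding mono_def lo_T_def using cl_sh_mono by blast

lemma mono_lo': "mono (\<lambda>F. lo' T dA F \<union> G)"
  unfolding mono_def lo'_def by blast

lemma lo_T_trace_nonexpansive:
  assumes "is_metric01 dA" and "\<forall>f\<in>F. trace_nonexpansive T dA d0 f"
  shows "\<forall>f\<in>lo_T T dA F. trace_nonexpansive T dA d0 f"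
  unfolding lo_T_def using assms
  by (auto intro: trace_nonexpansive_circ trace_nonexpansive_cl_sh trace_nonexpansive_one)

lemma alpha_T_lfp_eq_trace_hausdorff:
  assumes metric: "is_metric01 dA" and G: "\<forall>g\<in>G. unit_valued g"
    and peak: "\<forall>\<epsilon>>0. \<forall>x. \<exists>g\<in>G. g x = 1 \<and> (\<forall>x'. tminus (g x) (g x') \<ge> alpha_S G x x' - \<epsilon>)"
    and "mono \<Phi>" and lo'_G: "\<And>F. lo' T dA F \<union> G \<subseteq> \<Phi> F"
    and "\<Phi> {f. trace_nonexpansive T dA (alpha_S G) f} \<subseteq> {f. trace_nonexpansive T dA (alpha_S G) f}"
  shows "alpha_T (lfp \<Phi>) X1 X2 = trace_hausdorff T dA (alpha_S G) X1 X2"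
proof (rule alpha_T_eq_trace_hausdorff[OF metric G peak])
  have unfold: "lfp \<Phi> = \<Phi> (lfp \<Phi>)" using \<open>mono \<Phi>\<close> by (rule lfp_unfold)
  show "G \<subseteq> lfp \<Phi>" using lo'_G unfold by blast
  show "circ T dA a f \<in> lfp \<Phi>" if "f \<in> lfp \<Phi>" for a f
    using lo'_G[of "lfp \<Phi>"] unfold that unfolding lo'_def by blast
  show "\<forall>f\<in>lfp \<Phi>. trace_nonexpansive T dA (alpha_S G) f"
    using lfp_lowerbound[of \<Phi>, OF assms(6)] by blast
qed

theorem mainTheorem4:
  fixes T :: "('x \<times> 'a \<times> 'x) set" and dA :: "'a \<Rightarrow> 'a \<Rightarrow> real"
    and G :: "('x \<Rightarrow> real) set"
  assumes "is_metric01 dA"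
    and "\<forall>g\<in>G. \<forall>x. 0 \<le> g x \<and> g x \<le> 1"
    and "\<forall>\<epsilon>>0. \<forall>x. \<exists>g\<in>G. g x = 1 \<and>
           (\<forall>x'. tminus (g x) (g x') \<ge> alpha_S G x x' - \<epsilon>)"
  shows "(\<forall>X1 X2. alpha_T (lfp (\<lambda>F. lo_T T dA F \<union> G)) X1 X2
                  = trace_hausdorff T dA (alpha_S G) X1 X2)
       \<and> (\<forall>X1 X2. alpha_T (lfp (\<lambda>F. lo' T dA F \<union> G)) X1 X2
                  = trace_hausdorff T dA (alpha_S G) X1 X2)"
proof -
  let ?N = "{f. trace_nonexpansive T dA (alpha_S G) f}"
  have "lo_T T dA ?N \<subseteq> ?N" using lo_T_trace_nonexpansive[OF assms(1), of ?N] by blast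
  moreover have "G \<subseteq> ?N" using trace_nonexpansive_alpha_S[OF assms(2)] by blast
  ultimately have lo_T_N: "lo_T T dA ?N \<union> G \<subseteq> ?N" by blast
  with lo'_subset_lo_T have lo'_N: "lo' T dA ?N \<union> G \<subseteq> ?N" by blast
  have "alpha_T (lfp (\<lambda>F. lo_T T dA F \<union> G)) X1 X2 = trace_hausdorff T dA (alpha_S G) X1 X2" for X1 X2
    using lo'_subset_lo_T lo_T_N by (intro alpha_T_lfp_eq_trace_hausdorff[OF assms mono_lo_T]) blast+
  moreover have "alpha_T (lfp (\<lambda>F. lo' T dA F \<union> G)) X1 X2 = trace_hausdorff T dA (alpha_S G) X1 X2"
    for X1 X2
    using lo'_N by (intro alpha_T_lfp_eq_trace_hausdorff[OF assms mono_lo']) blast+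
  ultimately show ?thesis by blast
qed

end
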